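(* Let $G$ be a mirror graph, let $xy$ be an edge of $G$, let $v\in V(G)$ and $v'=v^{\alpha_{xy}}$. Then there exists a path $P=v v_1 v_2\cdots v_{n-1}v'$ in $G$ from $v$ to $v'$ such that $\alpha_{xy}=\alpha_{vv_1}\alpha_{v_1v_2}\alpha_{v_2v_3}\cdots\alpha_{v_{n-1}v'}$.
   Context: A partition $\{E_1,\dots,E_k\}$ of the edges of a finite connected simple graph $G$ is a mirror partition if for every $i$ there is an automorphism $\alpha_i$ with (i) $\alpha_i(u)=v,\alpha_i(v)=u$ for every $uv\in E_i$ and (ii) $G-E_i$ has exactly two components, swapped isomorphically by $\alpha_i$; $G$ is a mirror graph if it has one. Mirror graphs are partial cubes whose mirror partition is the partition into $\Theta$-classes, where $ab\,\Theta\,xy$ iff $d(a,x)+d(b,y)\neq d(a,y)+d(b,x)$. For an edge $xy$ of a mirror graph, $\alpha_{xy}$ denotes the unique automorphism of $G$ that swaps the endpoints of every edge $\Theta$-equivalent to $xy$ (the mirror automorphism of that class); it is an involution and $\alpha_{xy}=\alpha_{x'y'}$ whenever $xy\,\Theta\,x'y'$. Automorphisms act on the right: $v^{\alpha\beta}=(v^{\alpha})^{\beta}$. *)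

theory Defs
  imports Main
begin

definition simple_graph :: "'a set \<Rightarrow> ('a \<Rightarrow> 'a \<Rightarrow> bool) \<Rightarrow> bool" where
  "simple_graph V E \<longleftrightarrow> finite V \<and>
     (\<forall>u v. E u v \<longrightarrow> u \<in> V \<and> v \<in> V \<and> u \<noteq> v \<and> E v u)"

definition walk :: "'a set \<Rightarrow> ('a \<Rightarrow> 'a \<Rightarrow> bool) \<Rightarrow> 'a list \<Rightarrow> bool" where
  "walk V E ps \<longleftrightarrow> ps \<noteq> [] \<and> set ps \<subseteq> V \<and>
     (\<forall>i. Suc i < length ps \<longrightarrow> E (ps ! i) (ps ! Suc i))"

definition gpath :: "'a set \<Rightarrow> ('a \<Rightarrow> 'a \<Rightarrow> bool) \<Rightarrow> 'a list \<Rightarrow> bool" where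
  "gpath V E ps \<longleftrightarrow> walk V E ps \<and> distinct ps"

definition connected_on :: "'a set \<Rightarrow> ('a \<Rightarrow> 'a \<Rightarrow> bool) \<Rightarrow> bool" where
  "connected_on V E \<longleftrightarrow>
     (\<forall>u\<in>V. \<forall>v\<in>V. \<exists>ps. walk V E ps \<and> hd ps = u \<and> last ps = v)"

definition connected_graph :: "'a set \<Rightarrow> ('a \<Rightarrow> 'a \<Rightarrow> bool) \<Rightarrow> bool" where
  "connected_graph V E \<longleftrightarrow> simple_graph V E \<and> V \<noteq> {} \<and> connected_on V E"

definition gdist :: "'a set \<Rightarrow> ('a \<Rightarrow> 'a \<Rightarrow> bool) \<Rightarrow> 'a \<Rightarrow> 'a \<Rightarrow> nat" where
  "gdist V E u v = (LEAST n. \<exists>ps. walk V E ps \<and> hd ps = u \<and> last ps = v \<and> length ps = Suc n)"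

definition automorphism :: "'a set \<Rightarrow> ('a \<Rightarrow> 'a \<Rightarrow> bool) \<Rightarrow> ('a \<Rightarrow> 'a) \<Rightarrow> bool" where
  "automorphism V E \<sigma> \<longleftrightarrow> bij_betw \<sigma> V V \<and>
     (\<forall>u\<in>V. \<forall>v\<in>V. E u v \<longleftrightarrow> E (\<sigma> u) (\<sigma> v))"

definition edges :: "('a \<Rightarrow> 'a \<Rightarrow> bool) \<Rightarrow> 'a set set" where
  "edges E = {{u, v} | u v. E u v}"

definition del_edges :: "('a \<Rightarrow> 'a \<Rightarrow> bool) \<Rightarrow> 'a set set \<Rightarrow> 'a \<Rightarrow> 'a \<Rightarrow> bool" where
  "del_edges E F u v \<longleftrightarrow> E u v \<and> {u, v} \<notin> F"

definition two_components_swapped ::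
  "'a set \<Rightarrow> ('a \<Rightarrow> 'a \<Rightarrow> bool) \<Rightarrow> 'a set set \<Rightarrow> ('a \<Rightarrow> 'a) \<Rightarrow> bool" where
  "two_components_swapped V E F \<alpha> \<longleftrightarrow>
     (\<exists>A B. A \<noteq> {} \<and> B \<noteq> {} \<and> A \<inter> B = {} \<and> A \<union> B = V \<and>
        connected_on A (del_edges E F) \<and> connected_on B (del_edges E F) \<and>
        (\<forall>a\<in>A. \<forall>b\<in>B. \<not> del_edges E F a b) \<and>
        \<alpha> ` A = B \<and> \<alpha> ` B = A \<and>
        (\<forall>u\<in>A. \<forall>w\<in>A. del_edges E F u w \<longleftrightarrow> del_edges E F (\<alpha> u) (\<alpha> w)) \<and>
        (\<forall>u\<in>B. \<forall>w\<in>B. del_edges E F u w \<longleftrightarrow> del_edges E F (\<alpha> u) (\<alpha> w)))"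

definition mirror_partition :: "'a set \<Rightarrow> ('a \<Rightarrow> 'a \<Rightarrow> bool) \<Rightarrow> 'a set set set \<Rightarrow> bool" where
  "mirror_partition V E P \<longleftrightarrow>
     \<Union>P = edges E \<and> {} \<notin> P \<and>
     (\<forall>F1\<in>P. \<forall>F2\<in>P. F1 \<noteq> F2 \<longrightarrow> F1 \<inter> F2 = {}) \<and>
     (\<forall>F\<in>P. \<exists>\<alpha>. automorphism V E \<alpha> \<and>
        (\<forall>u v. E u v \<and> {u, v} \<in> F \<longrightarrow> \<alpha> u = v \<and> \<alpha> v = u) \<and>
        two_components_swapped V E F \<alpha>)"

definition mirror_graph :: "'a set \<Rightarrow> ('a \<Rightarrow> 'a \<Rightarrow> bool) \<Rightarrow> bool" where
  "mirror_graph V E \<longleftrightarrow> connected_graph V E \<and> (\<exists>P. mirror_partition V E P)"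

definition Theta :: "'a set \<Rightarrow> ('a \<Rightarrow> 'a \<Rightarrow> bool) \<Rightarrow> 'a \<Rightarrow> 'a \<Rightarrow> 'a \<Rightarrow> 'a \<Rightarrow> bool" where
  "Theta V E a b x y \<longleftrightarrow> E a b \<and> E x y \<and>
     gdist V E a x + gdist V E b y \<noteq> gdist V E a y + gdist V E b x"

text \<open>The mirror automorphism alpha_xy: the unique automorphism swapping the endpoints of
  every edge Theta-equivalent to xy (taken to be the identity outside V, so that it is
  unique as a HOL function).\<close>
definition mirror_aut :: "'a set \<Rightarrow> ('a \<Rightarrow> 'a \<Rightarrow> bool) \<Rightarrow> 'a \<Rightarrow> 'a \<Rightarrow> 'a \<Rightarrow> 'a" where
  "mirror_aut V E x y = (THE \<sigma>. automorphism V E \<sigma> \<and> (\<forall>w. w \<notin> V \<longrightarrow> \<sigma> w = w) \<and>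
     (\<forall>a b. Theta V E a b x y \<longrightarrow> \<sigma> a = b \<and> \<sigma> b = a))"

text \<open>Right action: the product alpha_{p0p1} alpha_{p1p2} ... applied to w, i.e. first
  alpha_{p0p1}, then alpha_{p1p2}, etc.\<close>
definition path_product :: "'a set \<Rightarrow> ('a \<Rightarrow> 'a \<Rightarrow> bool) \<Rightarrow> 'a list \<Rightarrow> 'a \<Rightarrow> 'a" where
  "path_product V E ps w =
     foldl (\<lambda>z i. mirror_aut V E (ps ! i) (ps ! Suc i) z) w [0..<length ps - 1]"

end

theory Submission
  imports Defs
begin

text \<open>Let \<open>F\<close> be the partition class of \<open>xy\<close>, \<open>\<alpha>\<close> its mirror, and \<open>A \<ni> v\<close>, \<open>B = \<alpha>(A)\<close>
  the two components of \<open>G - F\<close>. A path \<open>Q\<close> inside \<open>A\<close> from \<open>v\<close> to an end \<open>z\<close> of an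
  \<open>F\<close>-edge, followed by its mirror image from \<open>\<alpha>(z)\<close> back to \<open>\<alpha>(v)\<close>, is a path from \<open>v\<close>
  to \<open>\<alpha>(v)\<close>. Conjugating by \<open>\<alpha>\<close> maps the mirror automorphism of an edge to that of its image
  and every mirror automorphism is an involution, so the product along this path telescopes to
  \<open>\<alpha>\<^sub>Q \<alpha> \<alpha> \<alpha>\<^sub>Q\<^sup>-\<^sup>1 \<alpha> = \<alpha>\<close>.

  The substance is that \<open>\<alpha>\<close> is the mirror automorphism \<open>\<alpha>\<^sub>x\<^sub>y\<close>. The \<open>\<Theta>\<close>-class of \<open>xy\<close> is
  \<open>F\<close>, because the distance from a vertex grows by one when crossing \<open>F\<close> away from it; and an
  automorphism swapping the edges of \<open>F\<close> is unique, because a vertex on one side is determined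
  by its distances to the other side.\<close>

lemma walk_iff_successively:
  "walk V E ps \<longleftrightarrow> ps \<noteq> [] \<and> set ps \<subseteq> V \<and> successively E ps"
  unfolding walk_def successively_conv_nth by blast

lemma walk_append_iff:
  "xs \<noteq> [] \<Longrightarrow> ys \<noteq> [] \<Longrightarrow>
     walk V E (xs @ ys) \<longleftrightarrow> walk V E xs \<and> walk V E ys \<and> E (last xs) (hd ys)"
  by (auto simp: walk_iff_successively successively_append_iff)

lemma walk_mono:
  assumes "walk A R ps" "A \<subseteq> V" "\<And>u v. R u v \<Longrightarrow> E u v"
  shows "walk V E ps"
  using assms by (auto simp: walk_iff_successively elim: successively_mono)

lemma crossing_decomp:
  assumes "hd ps \<in> X" "last ps \<notin> X" "ps \<noteq> []"
  shows "\<exists>xs c c' ys. ps = xs @ c # c' # ys \<and> c \<in> X \<and> c' \<notin> X"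
  using assms
proof (induction ps rule: induct_list012)
  case (3 a b ps)
  show ?case
  proof (cases "b \<in> X")
    case True
    then obtain xs c c' ys where "b # ps = xs @ c # c' # ys" "c \<in> X" "c' \<notin> X"
      using "3.IH"(2) "3.prems" by auto
    then show ?thesis by (metis append_Cons)
  next
    case False
    then show ?thesis using "3.prems" by (metis append_Nil list.sel(1))
  qed
qed auto

lemma connected_on_crossing_edge:
  assumes "connected_on A R" "a \<in> A" "a \<in> X" "a' \<in> A" "a' \<notin> X"
  obtains c c' where "R c c'" "c \<in> A" "c' \<in> A" "c \<in> X" "c' \<notin> X"
proof -
  obtain ps where ps: "walk A R ps" "hd ps = a" "last ps = a'"
    using assms(1,2,4) by (auto simp: connected_on_def)
  then obtain xs c c' ys where "ps = xs @ c # c' # ys" "c \<in> X" "c' \<notin> X"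
    using crossing_decomp[of ps X] assms(3,5) by (auto simp: walk_def)
  with ps(1) show ?thesis
    using that by (auto simp: walk_iff_successively successively_append_iff)
qed

lemma path_of_walk:
  assumes "walk V E ps"
  obtains qs where "gpath V E qs" "hd qs = hd ps" "last qs = last ps" "set qs \<subseteq> set ps"
  using assms
proof (induction "length ps" arbitrary: ps rule: less_induct)
  case less
  show ?case
  proof (cases "distinct ps")
    case True then show ?thesis using less.prems by (auto simp: gpath_def)
  next
    case False
    then obtain xs y ys zs where eq: "ps = xs @ [y] @ ys @ [y] @ zs"
      using not_distinct_decomp by blast
    let ?ps = "xs @ [y] @ zs"
    have s: "successively E ps" "set ps \<subseteq> V"
      using less.prems(2) by (auto simp: walk_iff_successively)
    have "successively E (xs @ [y])"
      using s(1) eq by (auto simp: successively_append_iff)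
    moreover have "successively E ((xs @ [y] @ ys) @ ([y] @ zs))"
      using s(1) eq by simp
    then have "successively E ([y] @ zs)"
      by (simp only: successively_append_iff)
    ultimately have "successively E ?ps"
      by (auto simp: successively_append_iff)
    then have "walk V E ?ps"
      using s(2) eq by (auto simp: walk_iff_successively)
    moreover have "hd ?ps = hd ps" "last ?ps = last ps" "set ?ps \<subseteq> set ps"
      using eq by (cases xs; cases zs; auto)+
    ultimately show ?thesis
      using less.hyps[of ?ps] less.prems(1) eq by fastforce
  qed
qed

section \<open>Distance and automorphisms\<close>

locale connected_simple_graph =
  fixes V :: "'a set" and E :: "'a \<Rightarrow> 'a \<Rightarrow> bool"
  assumes simple: "simple_graph V E" and connected: "connected_on V E"
begin

abbreviation d :: "'a \<Rightarrow> 'a \<Rightarrow> nat" where "d \<equiv> gdist V E"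

lemma finite_V: "finite V"
  using simple by (simp add: simple_graph_def)

lemma edge_in_V: "E u v \<Longrightarrow> u \<in> V \<and> v \<in> V"
  using simple by (simp add: simple_graph_def)

lemma edge_sym: "E u v \<Longrightarrow> E v u"
  using simple by (simp add: simple_graph_def)

lemma walk_rev: "walk V E ps \<Longrightarrow> walk V E (rev ps)"
  by (auto simp: walk_iff_successively intro: successively_mono edge_sym)

lemma gdist_le_length:
  assumes "walk V E ps" "hd ps = u" "last ps = v"
  shows "d u v \<le> length ps - 1"
proof -
  have "length ps = Suc (length ps - 1)"
    using assms(1) by (simp add: walk_def)
  then show ?thesis
    unfolding gdist_def using assms by (intro Least_le) blast
qed

lemma geodesic_exists:
  assumes "u \<in> V" "v \<in> V"
  obtains ps where "walk V E ps" "hd ps = u" "last ps = v" "length ps = Suc (d u v)"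
proof -
  obtain ps where ps: "walk V E ps" "hd ps = u" "last ps = v"
    using connected assms by (auto simp: connected_on_def)
  have len: "length ps = Suc (length ps - 1)"
    using ps(1) by (simp add: walk_def)
  have "\<exists>ps. walk V E ps \<and> hd ps = u \<and> last ps = v \<and> length ps = Suc (d u v)"
    unfolding gdist_def by (rule LeastI_ex) (use ps len in blast)
  then show ?thesis using that by blast
qed

lemma gdist_edge_le: "E u v \<Longrightarrow> d u v \<le> 1"
  using gdist_le_length[of "[u, v]" u v] edge_in_V by (simp add: walk_iff_successively)

lemma gdist_sym:
  assumes "u \<in> V" "v \<in> V"
  shows "d u v = d v u"
proof -
  have "d v u \<le> d u v" if uv: "u \<in> V" "v \<in> V" for u v
  proof -
    obtain ps where "walk V E ps" "hd ps = u" "last ps = v" "length ps = Suc (d u v)"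
      using geodesic_exists uv by blast
    moreover from this have "ps \<noteq> []" by (auto simp: walk_def)
    ultimately show ?thesis
      using gdist_le_length[of "rev ps" v u] walk_rev by (simp add: hd_rev last_rev)
  qed
  then show ?thesis using assms by (meson le_antisym)
qed

lemma gdist_triangle:
  assumes "u \<in> V" "v \<in> V" "w \<in> V"
  shows "d u w \<le> d u v + d v w"
proof -
  obtain xs where xs: "walk V E xs" "hd xs = u" "last xs = v" "length xs = Suc (d u v)"
    using geodesic_exists assms by blast
  obtain ys where ys: "walk V E ys" "hd ys = v" "last ys = w" "length ys = Suc (d v w)"
    using geodesic_exists assms by blast
  show ?thesis
  proof (cases "tl ys = []")
    case True
    then have "v = w" using ys by (cases ys) auto
    then show ?thesis using xs gdist_le_length by fastforce
  next
    case False
    then obtain ys' where ys': "ys = v # ys'" "ys' \<noteq> []"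
      using ys(2) by (cases ys) auto
    then have "walk V E ys'" "E v (hd ys')"
      using walk_append_iff[of "[v]" ys'] ys(1) by auto
    moreover have "xs \<noteq> []"
      using xs(1) by (simp add: walk_def)
    ultimately have "walk V E (xs @ ys')"
      using walk_append_iff[of xs ys'] xs(1,3) ys'(2) by simp
    moreover have "hd (xs @ ys') = u" "last (xs @ ys') = w"
      using xs ys ys' \<open>xs \<noteq> []\<close> by auto
    ultimately show ?thesis
      using gdist_le_length[of "xs @ ys'" u w] xs ys ys' by simp
  qed
qed

lemma geodesic_split:
  assumes "walk V E ps" "hd ps = s" "last ps = t" "length ps = Suc (d s t)"
    and "ps = xs @ c # c' # ys"
  shows "d s c + 1 + d c' t \<le> d s t"
proof -
  have "walk V E (xs @ [c])" "walk V E (c' # ys)"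
    using walk_append_iff[of "xs @ [c]" "c' # ys"] assms(1,5) by auto
  moreover have "hd (xs @ [c]) = s" "last (c' # ys) = t"
    using assms(2,3,5) by (auto simp: hd_append)
  ultimately have "d s c \<le> length (xs @ [c]) - 1" "d c' t \<le> length (c' # ys) - 1"
    using gdist_le_length by (metis last_snoc, metis list.sel(1))
  then show ?thesis using assms(4,5) by simp
qed

lemma exists_neighbour_closer:
  assumes "s \<in> V" "t \<in> V" "s \<noteq> t"
  obtains s' where "E s s'" "d s' t < d s t"
proof -
  obtain ps where ps: "walk V E ps" "hd ps = s" "last ps = t" "length ps = Suc (d s t)"
    using geodesic_exists assms(1,2) by blast
  have "ps \<noteq> []" using ps(1) by (simp add: walk_def)
  then obtain rest where "ps = s # rest" using ps(2) by (cases ps) auto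
  moreover have "rest \<noteq> []" using calculation ps(3) assms(3) by auto
  ultimately obtain s' rest' where eq: "ps = s # s' # rest'" by (cases rest) auto
  then have "E s s'" using ps(1) by (simp add: walk_iff_successively)
  moreover have "d s' t < d s t" using geodesic_split[OF ps, of "[]"] eq by simp
  ultimately show ?thesis using that by blast
qed

lemma automorphism_in_V: "automorphism V E \<sigma> \<Longrightarrow> u \<in> V \<Longrightarrow> \<sigma> u \<in> V"
  by (auto simp: automorphism_def bij_betw_def)

lemma automorphism_inj_on: "automorphism V E \<sigma> \<Longrightarrow> inj_on \<sigma> V"
  by (simp add: automorphism_def bij_betw_def)

lemma automorphism_edge:
  assumes "automorphism V E \<sigma>" "E u v"
  shows "E (\<sigma> u) (\<sigma> v)"
  using assms edge_in_V[OF assms(2)] unfolding automorphism_def by blast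

lemma automorphism_inv_into:
  assumes "automorphism V E \<sigma>"
  shows "automorphism V E (inv_into V \<sigma>)"
proof -
  have b: "bij_betw \<sigma> V V" using assms by (simp add: automorphism_def)
  then have "inv_into V \<sigma> u \<in> V" "\<sigma> (inv_into V \<sigma> u) = u" if "u \<in> V" for u
    using that by (auto simp: bij_betw_def f_inv_into_f inv_into_into)
  then show ?thesis
    using assms bij_betw_inv_into[OF b] unfolding automorphism_def by metis
qed

lemma automorphism_comp:
  "automorphism V E \<sigma> \<Longrightarrow> automorphism V E \<tau> \<Longrightarrow> automorphism V E (\<sigma> \<circ> \<tau>)"
  by (auto simp: automorphism_def bij_betw_trans dest: bij_betwE)

lemma walk_automorphism_image:
  assumes "automorphism V E \<sigma>" "walk V E ps"
  shows "walk V E (map \<sigma> ps)"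
  using assms automorphism_in_V
  by (auto simp: walk_iff_successively successively_map intro: successively_mono automorphism_edge)

lemma gdist_automorphism:
  assumes "automorphism V E \<sigma>" "u \<in> V" "v \<in> V"
  shows "d (\<sigma> u) (\<sigma> v) = d u v"
proof -
  have le: "d (\<tau> u) (\<tau> v) \<le> d u v" if \<tau>: "automorphism V E \<tau>" and uv: "u \<in> V" "v \<in> V" for \<tau> u v
  proof -
    obtain ps where "walk V E ps" "hd ps = u" "last ps = v" "length ps = Suc (d u v)"
      using geodesic_exists uv by blast
    moreover from this have "ps \<noteq> []" by (auto simp: walk_def)
    ultimately show ?thesis
      using gdist_le_length[of "map \<tau> ps" "\<tau> u" "\<tau> v"] walk_automorphism_image[OF \<tau>]
      by (simp add: hd_map last_map)
  qed
  have "inv_into V \<sigma> (\<sigma> u) = u" "inv_into V \<sigma> (\<sigma> v) = v"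
    using assms automorphism_inj_on by auto
  then show ?thesis
    using le[OF assms] le[OF automorphism_inv_into[OF assms(1)], of "\<sigma> u" "\<sigma> v"]
      automorphism_in_V[OF assms(1)] assms(2,3) by simp
qed

section \<open>Mirror cuts\<close>

definition swaps_class :: "'a set set \<Rightarrow> ('a \<Rightarrow> 'a) \<Rightarrow> bool" where
  "swaps_class F \<sigma> \<longleftrightarrow> (\<forall>u v. E u v \<and> {u, v} \<in> F \<longrightarrow> \<sigma> u = v)"

definition mirror_cut :: "'a set set \<Rightarrow> ('a \<Rightarrow> 'a) \<Rightarrow> 'a set \<Rightarrow> 'a set \<Rightarrow> bool" where
  "mirror_cut F \<alpha> A B \<longleftrightarrow> A \<union> B = V \<and> A \<inter> B = {} \<and>
     automorphism V E \<alpha> \<and> swaps_class F \<alpha> \<and> \<alpha> ` A = B \<and> \<alpha> ` B = A \<and>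
     (\<forall>u v. E u v \<longrightarrow> ({u, v} \<in> F \<longleftrightarrow> (u \<in> A \<longleftrightarrow> v \<in> B))) \<and>
     connected_on A (del_edges E F) \<and> connected_on B (del_edges E F) \<and>
     (\<exists>u v. E u v \<and> {u, v} \<in> F)"

lemma mirror_cutD:
  assumes "mirror_cut F \<alpha> A B"
  shows "A \<union> B = V" "A \<inter> B = {}" "automorphism V E \<alpha>" "swaps_class F \<alpha>"
    "\<alpha> ` A = B" "\<alpha> ` B = A" "connected_on A (del_edges E F)" "connected_on B (del_edges E F)"
  using assms by (simp_all add: mirror_cut_def)

lemma mirror_cut_edge_iff:
  "mirror_cut F \<alpha> A B \<Longrightarrow> E u v \<Longrightarrow> {u, v} \<in> F \<longleftrightarrow> (u \<in> A \<longleftrightarrow> v \<in> B)"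
  by (simp add: mirror_cut_def)

lemma mirror_cut_sym:
  assumes c: "mirror_cut F \<alpha> A B"
  shows "mirror_cut F \<alpha> B A"
proof -
  have "{u, v} \<in> F \<longleftrightarrow> (u \<in> B \<longleftrightarrow> v \<in> A)" if "E u v" for u v
    using mirror_cut_edge_iff[OF c that] edge_in_V[OF that] mirror_cutD(1,2)[OF c] by blast
  then show ?thesis
    using c unfolding mirror_cut_def by (simp add: Un_commute Int_commute)
qed

lemma mirror_cut_orient:
  assumes "mirror_cut F \<alpha> A B" "v \<in> V"
  obtains X Y where "mirror_cut F \<alpha> X Y" "v \<in> X"
  using assms mirror_cut_sym mirror_cutD(1) by blast

lemma mirror_cut_crossing:
  assumes c: "mirror_cut F \<alpha> A B" and "E a b" "a \<in> A" "b \<in> B"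
  shows "\<alpha> a = b" "\<alpha> b = a" "{a, b} \<in> F"
proof -
  show F: "{a, b} \<in> F" using mirror_cut_edge_iff[OF c] assms by blast
  then show "\<alpha> a = b" "\<alpha> b = a"
    using mirror_cutD(4)[OF c] edge_sym assms(2) by (auto simp: swaps_class_def insert_commute)
qed

lemma mirror_cut_crossing_edge:
  assumes c: "mirror_cut F \<alpha> A B"
  obtains z z' where "E z z'" "z \<in> A" "z' \<in> B"
proof -
  obtain u v where uv: "E u v" "{u, v} \<in> F" using c by (auto simp: mirror_cut_def)
  then have "u \<in> A \<and> v \<in> B \<or> v \<in> A \<and> u \<in> B"
    using mirror_cut_edge_iff[OF c uv(1)] edge_in_V mirror_cutD(1)[OF c] by blast
  then show ?thesis using that uv(1) edge_sym by blast
qed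

lemma gdist_across_cut:
  assumes c: "mirror_cut F \<alpha> A B" and ab: "E a b" "a \<in> A" "b \<in> B" and s: "s \<in> A"
  shows "d s b = Suc (d s a)"
proof -
  have V: "s \<in> V" "a \<in> V" "b \<in> V" using s ab edge_in_V mirror_cutD(1)[OF c] by auto
  obtain ps where ps: "walk V E ps" "hd ps = s" "last ps = b" "length ps = Suc (d s b)"
    using geodesic_exists V by blast
  have "b \<notin> A" using ab mirror_cutD(2)[OF c] by blast
  then obtain xs c1 c2 ys where eq: "ps = xs @ c1 # c2 # ys" and c12: "c1 \<in> A" "c2 \<notin> A"
    using crossing_decomp[of ps A] ps s by (auto simp: walk_def)
  have e: "E c1 c2" using ps(1) eq by (auto simp: walk_iff_successively successively_append_iff)
  then have cV: "c1 \<in> V" "c2 \<in> V" using edge_in_V by auto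
  then have "c2 \<in> B" using c12 mirror_cutD(1)[OF c] by blast
  then have "\<alpha> c2 = c1" "\<alpha> b = a" using mirror_cut_crossing[OF c] e c12 ab by auto
  then have "d c2 b = d c1 a"
    using gdist_automorphism[OF mirror_cutD(3)[OF c] cV(2) V(3)] by simp
  moreover have "d s c1 + 1 + d c2 b \<le> d s b" using geodesic_split[OF ps eq] .
  moreover have "d s a \<le> d s c1 + d c1 a" using gdist_triangle V cV by blast
  moreover have "d s b \<le> d s a + d a b" using gdist_triangle V by blast
  moreover have "d a b \<le> 1" using gdist_edge_le ab by blast
  ultimately show ?thesis by linarith
qed

lemma Theta_iff_mirror_cut:
  assumes c: "mirror_cut L \<beta> X Y" and xy: "E x y" "{x, y} \<in> L" and ab: "E a b"
  shows "Theta V E a b x y \<longleftrightarrow> {a, b} \<in> L"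
proof -
  have V: "a \<in> V" "b \<in> V" "x \<in> V" using ab xy edge_in_V by auto
  obtain X' Y' where c': "mirror_cut L \<beta> X' Y'" and x: "x \<in> X'"
    using mirror_cut_orient[OF c V(3)] .
  have y: "y \<in> Y'" using mirror_cut_edge_iff[OF c' xy(1)] xy(2) x by simp
  have far: "d s y = Suc (d s x)" if "s \<in> X'" for s
    using gdist_across_cut[OF c' xy(1) x y that] .
  have near: "d s x = Suc (d s y)" if "s \<in> Y'" for s
    using gdist_across_cut[OF mirror_cut_sym[OF c'] edge_sym[OF xy(1)] y x that] .
  have side: "u \<in> X' \<longleftrightarrow> u \<notin> Y'" if "u \<in> V" for u
    using mirror_cutD(1,2)[OF c'] that by blast
  have "{a, b} \<in> L \<longleftrightarrow> (a \<in> X' \<longleftrightarrow> b \<in> Y')" using mirror_cut_edge_iff[OF c' ab] .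
  moreover have "Theta V E a b x y \<longleftrightarrow> d a x + d b y \<noteq> d a y + d b x"
    unfolding Theta_def using xy(1) ab by simp
  ultimately show ?thesis
    using far[of a] far[of b] near[of a] near[of b] side[OF V(1)] side[OF V(2)] by auto
qed

lemma mirror_cut_card_eq:
  assumes c: "mirror_cut F \<alpha> A B"
  shows "card A = card B"
proof -
  have "inj_on \<alpha> A"
    using automorphism_inj_on[OF mirror_cutD(3)[OF c]] mirror_cutD(1)[OF c] by (auto intro: inj_on_subset)
  then show ?thesis using card_image mirror_cutD(5)[OF c] by metis
qed

lemma mirror_cut_subset_side_eq:
  assumes c: "mirror_cut F \<alpha> A B" and c': "mirror_cut K \<beta> X Y" and "X \<subseteq> B"
  shows "X = B"
proof -
  have fin: "finite A" "finite B" "finite X" "finite Y"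
    using finite_V mirror_cutD(1)[OF c] mirror_cutD(1)[OF c'] by (auto intro: finite_subset)
  have "card A + card B = card V" "card X + card Y = card V"
    using card_Un_disjoint fin mirror_cutD(1,2)[OF c] mirror_cutD(1,2)[OF c'] by metis+
  then have "card X = card B"
    using mirror_cut_card_eq[OF c] mirror_cut_card_eq[OF c'] by simp
  then show ?thesis using card_subset_eq fin(2) assms(3) by blast
qed

lemma del_edges_walk_same_side:
  assumes c: "mirror_cut F \<alpha> A B"
  shows "successively (del_edges E F) ps \<Longrightarrow> ps \<noteq> [] \<Longrightarrow> hd ps \<in> A \<longleftrightarrow> last ps \<in> A"
proof (induction ps rule: induct_list012)
  case (3 u v ps)
  then have "E u v" "{u, v} \<notin> F" by (auto simp: del_edges_def)
  then have "u \<in> A \<longleftrightarrow> v \<in> A"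
    using mirror_cut_edge_iff[OF c] edge_in_V mirror_cutD(1,2)[OF c] by blast
  then show ?case using 3 by simp
qed auto

lemma swaps_class_del_edges:
  assumes \<sigma>: "automorphism V E \<sigma>" "swaps_class F \<sigma>" and uv: "del_edges E F u v"
  shows "del_edges E F (\<sigma> u) (\<sigma> v)"
proof (rule ccontr)
  have e: "E u v" "{u, v} \<notin> F" using uv by (auto simp: del_edges_def)
  then have V: "u \<in> V" "v \<in> V" "\<sigma> u \<in> V" "\<sigma> v \<in> V"
    using edge_in_V automorphism_in_V[OF \<sigma>(1)] by auto
  have e': "E (\<sigma> u) (\<sigma> v)" using automorphism_edge[OF \<sigma>(1) e(1)] .
  assume "\<not> del_edges E F (\<sigma> u) (\<sigma> v)"
  then have "{\<sigma> u, \<sigma> v} \<in> F" "{\<sigma> v, \<sigma> u} \<in> F"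
    using e' by (auto simp: del_edges_def insert_commute)
  then have "\<sigma> (\<sigma> u) = \<sigma> v" "\<sigma> (\<sigma> v) = \<sigma> u"
    using \<sigma>(2) e' edge_sym unfolding swaps_class_def by blast+
  then have "\<sigma> u = v" "\<sigma> v = u"
    using automorphism_inj_on[OF \<sigma>(1)] V by (auto dest: inj_onD)
  then show False using \<open>{\<sigma> u, \<sigma> v} \<in> F\<close> e(2) by (simp add: insert_commute)
qed

text \<open>The image of an \<open>F\<close>-avoiding walk from \<open>p\<close> to a cut edge is an \<open>F\<close>-avoiding walk
  ending on the other side.\<close>

lemma swaps_class_crosses:
  assumes c: "mirror_cut F \<alpha> A B" and \<sigma>: "automorphism V E \<sigma>" "swaps_class F \<sigma>" and p: "p \<in> A"
  shows "\<sigma> p \<in> B"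
proof -
  obtain z z' where z: "E z z'" "z \<in> A" "z' \<in> B"
    using mirror_cut_crossing_edge[OF c] .
  obtain qs where qs: "walk A (del_edges E F) qs" "hd qs = p" "last qs = z"
    using mirror_cutD(7)[OF c] p z by (auto simp: connected_on_def)
  have sq: "successively (del_edges E F) qs" "qs \<noteq> []"
    using qs by (auto simp: walk_iff_successively)
  have "successively (del_edges E F) (map \<sigma> qs)"
    unfolding successively_map using sq(1) by (rule successively_mono) (rule swaps_class_del_edges[OF \<sigma>])
  then have "\<sigma> p \<in> A \<longleftrightarrow> \<sigma> z \<in> A"
    using del_edges_walk_same_side[OF c, of "map \<sigma> qs"] sq(2) qs(2,3) by (simp add: hd_map last_map)
  moreover have "\<sigma> z = z'"
    using \<sigma>(2) z mirror_cut_crossing(3)[OF c z] unfolding swaps_class_def by blast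
  moreover have "\<sigma> p \<in> V"
    using automorphism_in_V[OF \<sigma>(1)] p mirror_cutD(1)[OF c] by blast
  ultimately show ?thesis using z(3) mirror_cutD(1,2)[OF c] by blast
qed

text \<open>A geodesic from \<open>\<sigma> p\<close> to \<open>a\<close> crosses the cut through an edge \<open>c\<^sub>1 c\<^sub>2\<close> swapped by both
  \<open>\<sigma>\<close> and \<open>\<tau>\<close>, so \<open>d (\<sigma> p) c\<^sub>1 = d p c\<^sub>2 = d (\<tau> p) c\<^sub>1\<close>.\<close>

lemma gdist_swapped_image_le:
  assumes c: "mirror_cut F \<alpha> A B"
    and \<sigma>: "automorphism V E \<sigma>" "swaps_class F \<sigma>" and \<tau>: "automorphism V E \<tau>" "swaps_class F \<tau>"
    and p: "p \<in> A" "\<sigma> p \<in> B" and a: "a \<in> A"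
  shows "d (\<tau> p) a \<le> d (\<sigma> p) a"
proof -
  have V: "p \<in> V" "\<sigma> p \<in> V" "\<tau> p \<in> V" "a \<in> V"
    using p a mirror_cutD(1)[OF c] automorphism_in_V \<sigma> \<tau> by auto
  obtain ps where ps: "walk V E ps" "hd ps = \<sigma> p" "last ps = a" "length ps = Suc (d (\<sigma> p) a)"
    using geodesic_exists V by blast
  have "a \<notin> B" using a mirror_cutD(2)[OF c] by blast
  then obtain xs c1 c2 ys where eq: "ps = xs @ c1 # c2 # ys" and c12: "c1 \<in> B" "c2 \<notin> B"
    using crossing_decomp[of ps B] ps p by (auto simp: walk_def)
  have e: "E c1 c2" using ps(1) eq by (auto simp: walk_iff_successively successively_append_iff)
  then have cV: "c1 \<in> V" "c2 \<in> V" using edge_in_V by auto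
  then have "c2 \<in> A" using c12(2) mirror_cutD(1)[OF c] by blast
  then have "{c2, c1} \<in> F" using mirror_cut_crossing(3)[OF c edge_sym[OF e]] c12(1) by blast
  then have "\<sigma> c2 = c1" "\<tau> c2 = c1"
    using \<sigma>(2) \<tau>(2) edge_sym[OF e] unfolding swaps_class_def by blast+
  then have "d (\<sigma> p) c1 = d p c2" "d (\<tau> p) c1 = d p c2"
    using gdist_automorphism \<sigma>(1) \<tau>(1) V(1) cV(2) by metis+
  moreover have "d (\<sigma> p) c1 + 1 + d c2 a \<le> d (\<sigma> p) a" using geodesic_split[OF ps eq] .
  moreover have "d (\<tau> p) a \<le> d (\<tau> p) c1 + d c1 a" using gdist_triangle V cV by blast
  moreover have "d c1 a \<le> d c1 c2 + d c2 a" using gdist_triangle V cV by blast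
  moreover have "d c1 c2 \<le> 1" using gdist_edge_le e by blast
  ultimately show ?thesis by linarith
qed

lemma mirror_cut_of_two_components:
  assumes \<alpha>: "automorphism V E \<alpha>" "swaps_class F \<alpha>" and tcs: "two_components_swapped V E F \<alpha>"
    and F: "\<exists>u v. E u v \<and> {u, v} \<in> F"
  obtains A B where "mirror_cut F \<alpha> A B"
proof -
  obtain A B where AB: "A \<inter> B = {}" "A \<union> B = V"
    "connected_on A (del_edges E F)" "connected_on B (del_edges E F)"
    "\<forall>a\<in>A. \<forall>b\<in>B. \<not> del_edges E F a b" "\<alpha> ` A = B" "\<alpha> ` B = A"
    using tcs unfolding two_components_swapped_def by (elim exE conjE) (rule that; assumption)
  have "{u, v} \<in> F \<longleftrightarrow> (u \<in> A \<longleftrightarrow> v \<in> B)" if e: "E u v" for u v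
  proof
    assume "{u, v} \<in> F"
    then have "\<alpha> u = v" "\<alpha> v = u"
      using \<alpha>(2) e edge_sym[OF e] unfolding swaps_class_def by (metis insert_commute)+
    then show "u \<in> A \<longleftrightarrow> v \<in> B"
      using AB(6,7) by (metis imageI)
  next
    assume "u \<in> A \<longleftrightarrow> v \<in> B"
    then have "u \<in> A \<and> v \<in> B \<or> v \<in> A \<and> u \<in> B"
      using AB(1,2) edge_in_V[OF e] by blast
    then have "\<not> del_edges E F u v \<or> \<not> del_edges E F v u" using AB(5) by blast
    then show "{u, v} \<in> F"
      using e edge_sym[OF e] unfolding del_edges_def by (metis insert_commute)
  qed
  then have "mirror_cut F \<alpha> A B"
    unfolding mirror_cut_def using AB(1-4,6,7) \<alpha> F by auto
  then show ?thesis using that by blast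
qed

lemma path_to_cut_edge:
  assumes c: "mirror_cut F \<alpha> A B" and v: "v \<in> A"
  obtains Q where "gpath V E Q" "hd Q = v" "set Q \<subseteq> A"
    "E (last Q) (\<alpha> (last Q))" "{last Q, \<alpha> (last Q)} \<in> F"
proof -
  obtain z z' where z: "E z z'" "z \<in> A" "z' \<in> B" using mirror_cut_crossing_edge[OF c] .
  obtain qs where "walk A (del_edges E F) qs" "hd qs = v" "last qs = z"
    using mirror_cutD(7)[OF c] v z(2) by (auto simp: connected_on_def)
  moreover have "A \<subseteq> V" using mirror_cutD(1)[OF c] by blast
  ultimately obtain Q where "gpath V E Q" "hd Q = v" "last Q = z" "set Q \<subseteq> A"
    using path_of_walk walk_mono[of A "del_edges E F" qs V E] by (metis del_edges_def walk_def order_trans)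
  then show ?thesis using that mirror_cut_crossing[OF c z] z(1) by auto
qed

lemma reflected_path:
  assumes c: "mirror_cut F \<alpha> A B" and Q: "gpath V E Q" "set Q \<subseteq> A" and e: "E (last Q) (\<alpha> (last Q))"
  shows "gpath V E (Q @ map \<alpha> (rev Q))"
proof -
  have \<alpha>: "automorphism V E \<alpha>" using mirror_cutD(3)[OF c] .
  have ne: "Q \<noteq> []" and w: "walk V E Q" using Q(1) by (auto simp: gpath_def walk_def)
  have "walk V E (map \<alpha> (rev Q))"
    using walk_automorphism_image[OF \<alpha> walk_rev[OF w]] .
  then have "walk V E (Q @ map \<alpha> (rev Q))"
    using walk_append_iff[of Q "map \<alpha> (rev Q)"] w e ne by (simp add: hd_map hd_rev)
  moreover have "distinct (map \<alpha> (rev Q))"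
    using Q mirror_cutD(1)[OF c] automorphism_inj_on[OF \<alpha>]
    by (auto simp: gpath_def distinct_map intro: inj_on_subset)
  moreover have "set (map \<alpha> (rev Q)) \<subseteq> B" using Q(2) mirror_cutD(5)[OF c] by auto
  ultimately show ?thesis
    using Q mirror_cutD(2)[OF c] by (auto simp: gpath_def)
qed

end

section \<open>Products of mirror automorphisms along walks\<close>

fun walk_prod :: "('a \<Rightarrow> 'a \<Rightarrow> 'a \<Rightarrow> 'a) \<Rightarrow> 'a list \<Rightarrow> 'a \<Rightarrow> 'a" where
  "walk_prod M (a # b # ps) w = walk_prod M (b # ps) (M a b w)"
| "walk_prod M ps w = w"

lemma path_product_eq_walk_prod:
  "path_product V E ps w = walk_prod (mirror_aut V E) ps w"
  unfolding path_product_def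
proof (induction ps arbitrary: w rule: induct_list012)
  case (3 a b ps)
  have "[0..<length (a # b # ps) - 1] = 0 # map Suc [0..<length (b # ps) - 1]"
    by (simp add: map_Suc_upt upt_conv_Cons del: upt_Suc)
  then show ?case using "3.IH"(2) by (simp add: foldl_map)
qed auto

lemma walk_prod_append:
  "xs \<noteq> [] \<Longrightarrow> ys \<noteq> [] \<Longrightarrow> walk_prod M (xs @ ys) w = walk_prod M ys (M (last xs) (hd ys) (walk_prod M xs w))"
proof (induction xs arbitrary: w rule: induct_list012)
  case (2 x) then show ?case by (cases ys) auto
qed auto

lemma walk_prod_rev_cancel:
  assumes M: "\<And>a b. E a b \<Longrightarrow> M a b = M b a \<and> (\<forall>u\<in>V. M a b u \<in> V \<and> M a b (M a b u) = u)"
  shows "successively E ps \<Longrightarrow> u \<in> V \<Longrightarrow> walk_prod M ps u \<in> V \<and> walk_prod M (rev ps) (walk_prod M ps u) = u"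
proof (induction ps arbitrary: u rule: induct_list012)
  case (3 a b ps)
  have ab: "E a b" and ps: "successively E (b # ps)" using "3.prems"(1) by auto
  have "M a b u \<in> V" using M[OF ab] "3.prems"(2) by blast
  note IH = "3.IH"(2)[OF ps this]
  have "walk_prod M (rev (a # b # ps)) (walk_prod M (a # b # ps) u)
      = walk_prod M (rev (b # ps) @ [a]) (walk_prod M (b # ps) (M a b u))"
    by simp
  also have "\<dots> = M b a (walk_prod M (rev (b # ps)) (walk_prod M (b # ps) (M a b u)))"
    by (subst walk_prod_append) (auto simp: last_rev)
  also have "\<dots> = u" using IH M[OF ab] "3.prems"(2) by auto
  finally show ?case using IH by simp
qed auto

lemma walk_prod_map_conj:
  assumes M: "\<And>a b u. E a b \<Longrightarrow> u \<in> V \<Longrightarrow> M (f a) (f b) u = f (M a b (f u)) \<and> M a b u \<in> V"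
    and f: "\<And>u. u \<in> V \<Longrightarrow> f u \<in> V \<and> f (f u) = u"
  shows "successively E ps \<Longrightarrow> u \<in> V \<Longrightarrow> walk_prod M (map f ps) u = f (walk_prod M ps (f u))"
proof (induction ps arbitrary: u rule: induct_list012)
  case (3 a b ps)
  have ab: "E a b" and ps: "successively E (b # ps)" using "3.prems"(1) by auto
  have e: "M (f a) (f b) u = f (M a b (f u))" and V: "M a b (f u) \<in> V"
    using M[OF ab "3.prems"(2)] M[OF ab] f "3.prems"(2) by auto
  then show ?case using "3.IH"(2)[OF ps] f by simp
qed (auto simp: f)

section \<open>Graphs with a mirror partition\<close>

locale mirror_partitioned_graph = connected_simple_graph +
  fixes P :: "'a set set set"
  assumes mirror_partition: "mirror_partition V E P"
begin

definition class_mirror :: "'a set set \<Rightarrow> 'a \<Rightarrow> 'a" where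
  "class_mirror F = (SOME \<alpha>. automorphism V E \<alpha> \<and> swaps_class F \<alpha> \<and> two_components_swapped V E F \<alpha>)"

lemma class_mirror_cut:
  assumes F: "F \<in> P"
  obtains A B where "mirror_cut F (class_mirror F) A B"
proof -
  have "\<forall>F\<in>P. \<exists>\<alpha>. automorphism V E \<alpha> \<and> (\<forall>u v. E u v \<and> {u, v} \<in> F \<longrightarrow> \<alpha> u = v \<and> \<alpha> v = u) \<and>
      two_components_swapped V E F \<alpha>"
    using mirror_partition by (simp add: mirror_partition_def)
  then obtain \<alpha> where \<alpha>: "automorphism V E \<alpha>" "\<forall>u v. E u v \<and> {u, v} \<in> F \<longrightarrow> \<alpha> u = v \<and> \<alpha> v = u"
    "two_components_swapped V E F \<alpha>"
    using F by blast
  have "swaps_class F \<alpha>" using \<alpha>(2) by (simp add: swaps_class_def)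
  then have "\<exists>\<alpha>. automorphism V E \<alpha> \<and> swaps_class F \<alpha> \<and> two_components_swapped V E F \<alpha>"
    using \<alpha>(1,3) by blast
  then have \<alpha>: "automorphism V E (class_mirror F)" "swaps_class F (class_mirror F)"
    "two_components_swapped V E F (class_mirror F)"
    unfolding class_mirror_def by (metis (mono_tags, lifting) someI_ex)+
  have "\<Union>P = edges E" "{} \<notin> P"
    using mirror_partition by (simp_all add: mirror_partition_def)
  then have "F \<noteq> {}" "F \<subseteq> edges E" using F by blast+
  then have "\<exists>u v. E u v \<and> {u, v} \<in> F" by (auto simp: edges_def)
  then show ?thesis using mirror_cut_of_two_components[OF \<alpha>] that by blast
qed

lemma edge_in_class:
  assumes "E a b"
  obtains K where "K \<in> P" "{a, b} \<in> K"
proof -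
  have "{a, b} \<in> edges E" using assms by (auto simp: edges_def)
  moreover have "\<Union>P = edges E" using mirror_partition by (simp add: mirror_partition_def)
  ultimately show ?thesis using that by blast
qed

lemma edge_class_cut:
  assumes "E a b"
  obtains K X Y where "K \<in> P" "{a, b} \<in> K" "mirror_cut K (class_mirror K) X Y" "a \<in> X"
proof -
  obtain K where K: "K \<in> P" "{a, b} \<in> K" using edge_in_class[OF assms] .
  obtain X0 Y0 where "mirror_cut K (class_mirror K) X0 Y0" using class_mirror_cut[OF K(1)] .
  then obtain X Y where "mirror_cut K (class_mirror K) X Y" "a \<in> X"
    using mirror_cut_orient edge_in_V[OF assms] by blast
  then show ?thesis using that K by blast
qed

text \<open>For \<open>s \<noteq> t\<close>, the first edge of a geodesic from \<open>s\<close> to \<open>t\<close> defines a second cut separating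
  \<open>s\<close> from \<open>t\<close>; by counting, both of its sides meet the connected side \<open>A\<close>, so some edge inside
  \<open>A\<close> crosses it, and \<open>s\<close> is closer to one end of that edge, \<open>t\<close> to the other.\<close>

lemma mirror_cut_eq_if_same_gdist:
  assumes c: "mirror_cut F \<alpha> A B" and st: "s \<in> B" "t \<in> B" and eq: "\<forall>a\<in>A. d s a = d t a"
  shows "s = t"
proof (rule ccontr)
  assume "s \<noteq> t"
  moreover have V: "s \<in> V" "t \<in> V" using st mirror_cutD(1)[OF c] by auto
  ultimately obtain s' where s': "E s s'" "d s' t < d s t"
    using exists_neighbour_closer by blast
  obtain K X Y where cX: "mirror_cut K (class_mirror K) X Y" and K: "{s, s'} \<in> K" and s: "s \<in> X"
    using edge_class_cut[OF s'(1)] by blast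
  have s'Y: "s' \<in> Y" using mirror_cut_edge_iff[OF cX s'(1)] K s by simp
  have t: "t \<in> Y"
  proof (rule ccontr)
    assume "t \<notin> Y"
    then have "t \<in> X" using mirror_cutD(1)[OF cX] V by blast
    then have "d t s' = Suc (d t s)" using gdist_across_cut[OF cX s'(1) s s'Y] by blast
    then show False using s'(2) gdist_sym V edge_in_V[OF s'(1)] by simp
  qed
  have "\<not> X \<subseteq> B" using mirror_cut_subset_side_eq[OF c cX] t st mirror_cutD(2)[OF cX] by blast
  then obtain a where a: "a \<in> A" "a \<in> X" using mirror_cutD(1)[OF c] mirror_cutD(1)[OF cX] by blast
  have "\<not> Y \<subseteq> B"
    using mirror_cut_subset_side_eq[OF c mirror_cut_sym[OF cX]] s st mirror_cutD(2)[OF cX] by blast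
  then obtain a' where a': "a' \<in> A" "a' \<notin> X"
    using mirror_cutD(1)[OF c] mirror_cutD(1,2)[OF cX] by blast
  obtain c1 c2 where "del_edges E F c1 c2" "c1 \<in> A" "c2 \<in> A" "c1 \<in> X" "c2 \<notin> X"
    using connected_on_crossing_edge[OF mirror_cutD(7)[OF c] a a'] .
  moreover from this have e: "E c1 c2" by (simp add: del_edges_def)
  moreover from this have "c2 \<in> Y" using calculation(5) mirror_cutD(1)[OF cX] edge_in_V by blast
  ultimately have "d s c2 = Suc (d s c1)" "d t c1 = Suc (d t c2)" "d s c1 = d t c1" "d s c2 = d t c2"
    using gdist_across_cut[OF cX e _ _ s] gdist_across_cut[OF mirror_cut_sym[OF cX] edge_sym[OF e] _ _ t]
      eq by auto
  then show False by simp
qed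

lemma swaps_class_unique:
  assumes c: "mirror_cut F \<alpha> A B" and \<sigma>: "automorphism V E \<sigma>" "swaps_class F \<sigma>" and p: "p \<in> V"
  shows "\<sigma> p = \<alpha> p"
proof -
  obtain X Y where c': "mirror_cut F \<alpha> X Y" and pX: "p \<in> X"
    using mirror_cut_orient[OF c p] .
  have \<alpha>: "automorphism V E \<alpha>" "swaps_class F \<alpha>" using mirror_cutD(3,4)[OF c] .
  have Y: "\<sigma> p \<in> Y" "\<alpha> p \<in> Y" using swaps_class_crosses[OF c' _ _ pX] \<sigma> \<alpha> by blast+
  have "\<forall>a\<in>X. d (\<sigma> p) a = d (\<alpha> p) a"
    using gdist_swapped_image_le[OF c' \<sigma> \<alpha> pX Y(1)] gdist_swapped_image_le[OF c' \<alpha> \<sigma> pX Y(2)]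
    by (meson le_antisym)
  then show ?thesis using mirror_cut_eq_if_same_gdist[OF c' Y] by blast
qed

lemma mirror_cut_involution:
  assumes c: "mirror_cut F \<alpha> A B" and u: "u \<in> V"
  shows "\<alpha> (\<alpha> u) = u"
proof -
  have \<alpha>: "automorphism V E \<alpha>" using mirror_cutD(3)[OF c] .
  have "inv_into V \<alpha> x = y" if e: "E x y" "{x, y} \<in> F" for x y
  proof -
    have "\<alpha> y = x"
      using mirror_cutD(4)[OF c] edge_sym[OF e(1)] e(2) unfolding swaps_class_def
      by (metis insert_commute)
    then show ?thesis
      using automorphism_inj_on[OF \<alpha>] edge_in_V[OF e(1)] by (metis inv_into_f_f)
  qed
  then have "inv_into V \<alpha> u = \<alpha> u"
    using swaps_class_unique[OF c automorphism_inv_into[OF \<alpha>] _ u] unfolding swaps_class_def by blast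
  moreover have "u \<in> \<alpha> ` V" using \<alpha> u by (simp add: automorphism_def bij_betw_def)
  ultimately show ?thesis by (metis f_inv_into_f)
qed


text \<open>\<open>mirror_aut\<close> is pinned down as the identity outside \<open>V\<close>, so the candidates are
  extended accordingly.\<close>

definition id_outside :: "('a \<Rightarrow> 'a) \<Rightarrow> 'a \<Rightarrow> 'a" where
  "id_outside \<sigma> w = (if w \<in> V then \<sigma> w else w)"

definition mirror_of :: "'a \<Rightarrow> 'a \<Rightarrow> ('a \<Rightarrow> 'a) \<Rightarrow> bool" where
  "mirror_of a b \<sigma> \<longleftrightarrow> automorphism V E \<sigma> \<and> (\<forall>w. w \<notin> V \<longrightarrow> \<sigma> w = w) \<and>
     (\<forall>c e. Theta V E c e a b \<longrightarrow> \<sigma> c = e \<and> \<sigma> e = c)"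

lemma automorphism_id_outside:
  assumes "automorphism V E \<sigma>"
  shows "automorphism V E (id_outside \<sigma>)"
proof -
  have "bij_betw (id_outside \<sigma>) V V"
    using assms unfolding automorphism_def by (subst bij_betw_cong[where g = \<sigma>]) (auto simp: id_outside_def)
  then show ?thesis using assms by (simp add: automorphism_def id_outside_def)
qed

lemma mirror_of_class_mirror:
  assumes K: "K \<in> P" "{a, b} \<in> K" and ab: "E a b"
  shows "mirror_of a b (id_outside (class_mirror K))"
proof -
  obtain X Y where c: "mirror_cut K (class_mirror K) X Y" using class_mirror_cut[OF K(1)] .
  have "id_outside (class_mirror K) c = e \<and> id_outside (class_mirror K) e = c"
    if "Theta V E c e a b" for c e
  proof -
    have e: "E c e" using that by (simp add: Theta_def)
    then have "{c, e} \<in> K" using Theta_iff_mirror_cut[OF c ab K(2) e] that by simp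
    then have "c \<in> X \<and> e \<in> Y \<or> e \<in> X \<and> c \<in> Y"
      using mirror_cut_edge_iff[OF c e] edge_in_V[OF e] mirror_cutD(1)[OF c] by blast
    then show ?thesis
      using mirror_cut_crossing[OF c] e edge_sym[OF e] edge_in_V[OF e] by (auto simp: id_outside_def)
  qed
  then show ?thesis
    using automorphism_id_outside[OF mirror_cutD(3)[OF c]] by (simp add: mirror_of_def id_outside_def)
qed

lemma mirror_of_unique:
  assumes K: "K \<in> P" "{a, b} \<in> K" and ab: "E a b" and \<sigma>: "mirror_of a b \<sigma>"
  shows "\<sigma> = id_outside (class_mirror K)"
proof
  fix w
  obtain X Y where c: "mirror_cut K (class_mirror K) X Y" using class_mirror_cut[OF K(1)] .
  have "swaps_class K \<sigma>"
    using \<sigma> Theta_iff_mirror_cut[OF c ab K(2)] by (auto simp: swaps_class_def mirror_of_def)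
  then show "\<sigma> w = id_outside (class_mirror K) w"
    using swaps_class_unique[OF c] \<sigma> by (auto simp: mirror_of_def id_outside_def)
qed

lemma mirror_aut_eq_class_mirror:
  assumes K: "K \<in> P" "{a, b} \<in> K" and ab: "E a b"
  shows "mirror_aut V E a b = id_outside (class_mirror K)"
  unfolding mirror_aut_def mirror_of_def[symmetric]
  using mirror_of_class_mirror[OF assms] mirror_of_unique[OF assms] by (rule the_equality)

lemma mirror_aut_eq:
  assumes "E a b" "mirror_of a b \<sigma>"
  shows "mirror_aut V E a b = \<sigma>"
proof -
  obtain K where "K \<in> P" "{a, b} \<in> K" using edge_in_class[OF assms(1)] .
  then show ?thesis using mirror_aut_eq_class_mirror mirror_of_unique assms by metis
qed

lemma mirror_aut_involution:
  assumes ab: "E a b" and u: "u \<in> V"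
  shows "mirror_aut V E a b u \<in> V" "mirror_aut V E a b (mirror_aut V E a b u) = u"
proof -
  obtain K X Y where K: "K \<in> P" "{a, b} \<in> K" and c: "mirror_cut K (class_mirror K) X Y"
    using edge_class_cut[OF ab] .
  then show "mirror_aut V E a b u \<in> V" "mirror_aut V E a b (mirror_aut V E a b u) = u"
    using mirror_aut_eq_class_mirror[OF K ab] mirror_cut_involution[OF c]
      automorphism_in_V[OF mirror_cutD(3)[OF c]] u
    by (simp_all add: id_outside_def)
qed

lemma mirror_aut_commute:
  assumes ab: "E a b"
  shows "mirror_aut V E a b = mirror_aut V E b a"
proof -
  obtain K where K: "K \<in> P" "{a, b} \<in> K" using edge_in_class[OF ab] .
  then have "{b, a} \<in> K" by (simp add: insert_commute)
  then show ?thesis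
    using mirror_aut_eq_class_mirror[OF K ab] mirror_aut_eq_class_mirror[OF K(1) _ edge_sym[OF ab]] by simp
qed

text \<open>\<open>\<Theta>\<close> is \<open>\<sigma>\<close>-invariant, so conjugating
  the mirror of \<open>ab\<close> by \<open>\<sigma>\<close> gives a mirror of \<open>\<sigma>(a) \<sigma>(b)\<close>.\<close>

lemma mirror_aut_conj:
  assumes \<sigma>: "automorphism V E \<sigma>" "\<And>u. u \<in> V \<Longrightarrow> \<sigma> (\<sigma> u) = u" and ab: "E a b" and w: "w \<in> V"
  shows "mirror_aut V E (\<sigma> a) (\<sigma> b) w = \<sigma> (mirror_aut V E a b (\<sigma> w))"
proof -
  let ?M = "mirror_aut V E a b"
  let ?\<tau> = "id_outside \<sigma> \<circ> ?M \<circ> id_outside \<sigma>"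
  have V: "a \<in> V" "b \<in> V" using edge_in_V[OF ab] by auto
  obtain K where K: "K \<in> P" "{a, b} \<in> K" using edge_in_class[OF ab] .
  have M: "mirror_of a b ?M"
    using mirror_aut_eq_class_mirror[OF K ab] mirror_of_class_mirror[OF K ab] by simp
  have "mirror_of (\<sigma> a) (\<sigma> b) ?\<tau>"
    unfolding mirror_of_def
  proof (intro conjI allI impI)
    show "automorphism V E ?\<tau>"
      using M automorphism_comp automorphism_id_outside \<sigma>(1) by (simp add: mirror_of_def)
    show "?\<tau> w = w" if "w \<notin> V" for w
      using M that by (simp add: mirror_of_def id_outside_def)
  next
    fix c e assume t: "Theta V E c e (\<sigma> a) (\<sigma> b)"
    then have ce: "E c e" by (simp add: Theta_def)
    then have "c \<in> V" "e \<in> V" using edge_in_V by auto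
    moreover have "d (\<sigma> x) y = d x (\<sigma> y)" if "x \<in> V" "y \<in> V" for x y
      using gdist_automorphism[OF \<sigma>(1), of "\<sigma> x" y] \<sigma> automorphism_in_V that by simp
    ultimately have "Theta V E (\<sigma> c) (\<sigma> e) a b"
      using t ab automorphism_edge[OF \<sigma>(1) ce] V automorphism_in_V[OF \<sigma>(1)] by (simp add: Theta_def)
    then have "?M (\<sigma> c) = \<sigma> e" "?M (\<sigma> e) = \<sigma> c" using M by (simp_all add: mirror_of_def)
    then show "?\<tau> c = e" "?\<tau> e = c"
      using \<open>c \<in> V\<close> \<open>e \<in> V\<close> \<sigma> automorphism_in_V[OF \<sigma>(1)] by (simp_all add: id_outside_def)
  qed
  then have "mirror_aut V E (\<sigma> a) (\<sigma> b) = ?\<tau>"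
    using mirror_aut_eq automorphism_edge[OF \<sigma>(1) ab] by blast
  then show ?thesis
    using w mirror_aut_involution(1)[OF ab] automorphism_in_V[OF \<sigma>(1)] by (simp add: id_outside_def)
qed

lemma walk_prod_reflected_walk:
  assumes F: "F \<in> P" and Q: "walk V E Q" and z: "{last Q, class_mirror F (last Q)} \<in> F"
    "E (last Q) (class_mirror F (last Q))" and w: "w \<in> V"
  shows "walk_prod (mirror_aut V E) (Q @ map (class_mirror F) (rev Q)) w = class_mirror F w"
proof -
  let ?\<alpha> = "class_mirror F" and ?M = "mirror_aut V E"
  obtain A B where c: "mirror_cut F ?\<alpha> A B" using class_mirror_cut[OF F] .
  have \<alpha>: "automorphism V E ?\<alpha>" "\<And>u. u \<in> V \<Longrightarrow> ?\<alpha> u \<in> V \<and> ?\<alpha> (?\<alpha> u) = u"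
    using mirror_cutD(3)[OF c] automorphism_in_V mirror_cut_involution[OF c] by auto
  have ne: "Q \<noteq> []" and sQ: "successively E Q"
    using Q by (auto simp: walk_iff_successively)
  have inv: "?M a b = ?M b a \<and> (\<forall>u\<in>V. ?M a b u \<in> V \<and> ?M a b (?M a b u) = u)" if "E a b" for a b
    using mirror_aut_involution[OF that] mirror_aut_commute[OF that] by blast
  let ?u = "walk_prod ?M Q w"
  have u: "?u \<in> V" "walk_prod ?M (rev Q) ?u = w"
    using walk_prod_rev_cancel[of E ?M V, OF inv sQ w] by auto
  have cut_edge: "?M (last Q) (?\<alpha> (last Q)) ?u = ?\<alpha> ?u"
    using mirror_aut_eq_class_mirror[OF F z] u(1) by (simp add: id_outside_def)
  have "?M (?\<alpha> a) (?\<alpha> b) u = ?\<alpha> (?M a b (?\<alpha> u)) \<and> ?M a b u \<in> V"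
    if "E a b" "u \<in> V" for a b u
    using mirror_aut_conj[OF \<alpha>(1) _ that] mirror_aut_involution(1)[OF that] \<alpha>(2) by blast
  moreover have "successively E (rev Q)"
    using sQ by (auto intro: successively_mono edge_sym)
  ultimately have "walk_prod ?M (map ?\<alpha> (rev Q)) (?\<alpha> ?u) = ?\<alpha> w"
    using walk_prod_map_conj[of E V ?M ?\<alpha>] \<alpha>(2) u by metis
  then show ?thesis
    using walk_prod_append[of Q "map ?\<alpha> (rev Q)" ?M w] ne cut_edge by (simp add: hd_map hd_rev)
qed

end

theorem lemma5:
  fixes V :: "'a set" and E :: "'a \<Rightarrow> 'a \<Rightarrow> bool" and x y v :: 'a
  assumes "mirror_graph V E"
    and "E x y"
    and "v \<in> V"
  shows "\<exists>ps. gpath V E ps \<and> hd ps = v \<and> last ps = mirror_aut V E x y v \<and>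
           (\<forall>w\<in>V. mirror_aut V E x y w = path_product V E ps w)"
proof -
  obtain P where "mirror_partition V E P" "simple_graph V E" "connected_on V E"
    using assms(1) by (auto simp: mirror_graph_def connected_graph_def)
  then interpret mirror_partitioned_graph V E P by unfold_locales
  obtain F X Y where F: "F \<in> P" "{x, y} \<in> F" and "mirror_cut F (class_mirror F) X Y"
    using edge_class_cut[OF assms(2)] .
  then obtain A B where c: "mirror_cut F (class_mirror F) A B" and v: "v \<in> A"
    using mirror_cut_orient assms(3) by metis
  let ?\<alpha> = "class_mirror F"
  obtain Q where Q: "gpath V E Q" "hd Q = v" "set Q \<subseteq> A"
    "E (last Q) (?\<alpha> (last Q))" "{last Q, ?\<alpha> (last Q)} \<in> F"
    using path_to_cut_edge[OF c v] .
  let ?ps = "Q @ map ?\<alpha> (rev Q)"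
  have ne: "Q \<noteq> []" using Q(1) by (simp add: gpath_def walk_def)
  have M: "mirror_aut V E x y = id_outside ?\<alpha>"
    using mirror_aut_eq_class_mirror[OF F assms(2)] .
  have "gpath V E ?ps" using reflected_path[OF c Q(1,3,4)] .
  moreover have "hd ?ps = v" "last ?ps = mirror_aut V E x y v"
    using ne Q(2) M assms(3) by (simp_all add: last_map last_rev id_outside_def)
  moreover have "mirror_aut V E x y w = path_product V E ?ps w" if "w \<in> V" for w
    using walk_prod_reflected_walk[OF F(1) _ Q(5,4) that] Q(1) M that
    by (simp add: gpath_def path_product_eq_walk_prod id_outside_def)
  ultimately show ?thesis by blast
qed

end
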